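(* Let $S$ and $A$ be finite-dimensional quantum systems, $\rho^S_0$ a density matrix on $S$, $U$ a unitary on $S\otimes A$, $H^A$ a Hermitian operator on $A$, $\beta>0$, and $\Gamma^A=e^{-\beta H^A}/\operatorname{Tr}e^{-\beta H^A}$. Define the CPTP map $\mathcal E(X)=\operatorname{Tr}_S[U(\rho^S_0\otimes X)U^\dagger]$ on operators of $A$, with trace-dual $\mathcal E^\dagger$, and let $\langle Q\rangle=\operatorname{Tr}[\mathcal E(\Gamma^A)H^A]-\operatorname{Tr}[\Gamma^AH^A]$. Let $\gamma^A:=\mathcal E^\dagger(\Gamma^A)/\operatorname{Tr}[\mathcal E^\dagger(\Gamma^A)]$. Then $$\beta\langle Q\rangle\ \ge\ D(\Gamma^A\|\gamma^A)-\ln\operatorname{Tr}[\mathcal E^\dagger(\Gamma^A)].$$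
   Context: The trace-dual $\mathcal E^\dagger$ satisfies $\operatorname{Tr}[\mathcal E(X)Y]=\operatorname{Tr}[X\mathcal E^\dagger(Y)]$ for all $X,Y$. For density matrices $\rho,\sigma$, $D(\rho\|\sigma)=\operatorname{Tr}[\rho\ln\rho-\rho\ln\sigma]$ if $\operatorname{supp}\rho\subseteq\operatorname{supp}\sigma$ and $+\infty$ otherwise (Umegaki relative entropy). *)

theory Defs
  imports "HOL-Analysis.Analysis"
begin

text \<open>Finite-dimensional operators are complex square matrices indexed by a finite type.
  A composite system S (x) A is indexed by the product type 's \<times> 'a.\<close>

type_synonym 'n cmat = "complex^'n^'n"

definition adj :: "complex^'n::finite^'m::finite \<Rightarrow> complex^'m^'n" where
  "adj A = (\<chi> i j. cnj (A $ j $ i))"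

definition hermitian :: "'n::finite cmat \<Rightarrow> bool" where
  "hermitian A \<longleftrightarrow> adj A = A"

definition unitary :: "'n::finite cmat \<Rightarrow> bool" where
  "unitary U \<longleftrightarrow> adj U ** U = mat 1 \<and> U ** adj U = mat 1"

definition cinner :: "complex^'n::finite \<Rightarrow> complex^'n \<Rightarrow> complex" where
  "cinner v w = (\<Sum>i\<in>UNIV. cnj (v $ i) * w $ i)"

definition psd :: "'n::finite cmat \<Rightarrow> bool" where
  "psd A \<longleftrightarrow> hermitian A \<and> (\<forall>v. 0 \<le> Re (cinner v (A *v v)))"

definition density :: "'n::finite cmat \<Rightarrow> bool" where
  "density \<rho> \<longleftrightarrow> psd \<rho> \<and> trace \<rho> = 1"

definition cdiag :: "('n::finite \<Rightarrow> real) \<Rightarrow> 'n cmat" where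
  "cdiag d = (\<chi> i j. if i = j then complex_of_real (d i) else 0)"

definition mat_fun :: "(real \<Rightarrow> real) \<Rightarrow> 'n::finite cmat \<Rightarrow> 'n cmat" where
  "mat_fun f A = (SOME B. \<exists>V d. unitary V \<and> A = V ** cdiag d ** adj V
                               \<and> B = V ** cdiag (f \<circ> d) ** adj V)"

abbreviation mat_exp :: "'n::finite cmat \<Rightarrow> 'n cmat" where
  "mat_exp \<equiv> mat_fun exp"

text \<open>Matrix logarithm; on the kernel we use Isabelle's ln 0 = 0, i.e. the usual
  convention 0 ln 0 = 0 / logarithm taken on the support.\<close>
abbreviation mat_ln :: "'n::finite cmat \<Rightarrow> 'n cmat" where
  "mat_ln \<equiv> mat_fun ln"

definition cscale :: "complex \<Rightarrow> complex^'n::finite^'m::finite \<Rightarrow> complex^'n^'m" where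
  "cscale c M = (\<chi> i j. c * M $ i $ j)"

definition supp :: "'n::finite cmat \<Rightarrow> (complex^'n) set" where
  "supp A = range (\<lambda>v. A *v v)"

definition rel_entropy :: "'n::finite cmat \<Rightarrow> 'n cmat \<Rightarrow> ereal" where
  "rel_entropy \<rho> \<sigma> =
     (if supp \<rho> \<subseteq> supp \<sigma>
      then ereal (Re (trace (\<rho> ** mat_ln \<rho> - \<rho> ** mat_ln \<sigma>)))
      else \<infinity>)"

definition gibbs :: "real \<Rightarrow> 'n::finite cmat \<Rightarrow> 'n cmat" where
  "gibbs \<beta> H = cscale (1 / trace (mat_exp (cscale (- complex_of_real \<beta>) H)))
                       (mat_exp (cscale (- complex_of_real \<beta>) H))"

definition kron :: "'s::finite cmat \<Rightarrow> 'a::finite cmat \<Rightarrow> ('s \<times> 'a) cmat" where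
  "kron X Y = (\<chi> p q. X $ fst p $ fst q * Y $ snd p $ snd q)"

definition ptrace_S :: "('s::finite \<times> 'a::finite) cmat \<Rightarrow> 'a cmat" where
  "ptrace_S M = (\<chi> j l. \<Sum>i\<in>UNIV. M $ (i, j) $ (i, l))"

definition channel :: "'s::finite cmat \<Rightarrow> ('s \<times> 'a::finite) cmat \<Rightarrow> 'a cmat \<Rightarrow> 'a cmat" where
  "channel \<rho>0 U X = ptrace_S (U ** kron \<rho>0 X ** adj U)"

definition trace_dual :: "('n::finite cmat \<Rightarrow> 'm::finite cmat) \<Rightarrow> 'm cmat \<Rightarrow> 'n cmat" where
  "trace_dual E Y = (THE Z. \<forall>X. trace (E X ** Y) = trace (X ** Z))"

end

theory Submission
  imports Defs
begin

(*
  Write Gamma = exp(-beta H) / Z and let E^+ = sum_k K_k^+ (.) K_k be the trace-dual of the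
  channel, written in Kraus form; E^+ is unital because the channel preserves the trace.
  Since beta H = -ln Gamma - ln Z, unitality gives
    beta <Q> = Tr[Gamma ln Gamma] - Tr[Gamma E^+(ln Gamma)],
  while normalizing gamma only shifts its logarithm by a constant:
    D(Gamma || gamma) - ln Tr E^+(Gamma) = Tr[Gamma ln Gamma] - Tr[Gamma ln E^+(Gamma)].
  So the theorem is the operator Jensen inequality E^+(ln A) <= ln E^+(A) for positive definite A,
  tested against Gamma. It follows from Choi's inequality E^+(A)^-1 <= E^+(A^-1), applied to all
  shifts A + t (t >= 0), through the resolvent representation
  ln x = integral_0^oo (1/(1+t) - 1/(x+t)) dt of the logarithm.
*)

lemma adj_entry [simp]: "adj A $ i $ j = cnj (A $ j $ i)"
  by (simp add: adj_def)

lemma adj_adj [simp]: "adj (adj A) = A"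
  by (simp add: vec_eq_iff)

lemma adj_mult: "adj (A ** B) = adj B ** adj A"
  by (simp add: vec_eq_iff matrix_matrix_mult_def mult.commute)

lemma adj_add: "adj (A + B) = adj A + adj B"
  by (simp add: vec_eq_iff)

lemma adj_zero [simp]: "adj 0 = 0"
  by (simp add: vec_eq_iff)

lemma adj_sum: "adj (sum f S) = (\<Sum>k\<in>S. adj (f k))"
  by (induction S rule: infinite_finite_induct) (auto simp: adj_add)

lemma adj_cdiag [simp]: "adj (cdiag d) = cdiag d"
  by (simp add: vec_eq_iff cdiag_def)

lemma cscale_entry [simp]: "cscale c M $ i $ j = c * M $ i $ j"
  by (simp add: cscale_def)

lemma cscale_mult_left: "cscale c A ** B = cscale c (A ** B)"
  by (simp add: vec_eq_iff matrix_matrix_mult_def sum_distrib_left mult.assoc)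

lemma cscale_mult_right: "A ** cscale c B = cscale c (A ** B)"
  by (simp add: vec_eq_iff matrix_matrix_mult_def sum_distrib_left algebra_simps)

lemma cscale_sum: "cscale c (sum f S) = (\<Sum>k\<in>S. cscale c (f k))"
  by (simp add: vec_eq_iff sum_distrib_left)

lemma trace_mult_cscale: "trace (A ** cscale c B) = c * trace (A ** B)"
  by (simp add: cscale_mult_right trace_def sum_distrib_left)

lemma trace_cscale_mat_1: "trace (A ** cscale c (mat 1)) = c * trace A"
  by (simp add: trace_mult_cscale)

lemma matrix_add_rdistrib: "(A + B) ** C = A ** C + B ** (C :: 'a::semiring_1^'p^'n)"
  by (simp add: vec_eq_iff matrix_matrix_mult_def sum.distrib distrib_right)

lemma matrix_diff_ldistrib: "A ** (B - C) = A ** B - A ** (C :: 'a::ring_1^'p^'n)"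
  by (simp add: vec_eq_iff matrix_matrix_mult_def sum_subtractf right_diff_distrib)

lemma matrix_diff_rdistrib: "(A - B) ** C = A ** C - B ** (C :: 'a::ring_1^'p^'n)"
  by (simp add: vec_eq_iff matrix_matrix_mult_def sum_subtractf left_diff_distrib)

lemma matrix_mult_sum_left: "A ** sum f S = (\<Sum>k\<in>S. A ** f k)"
  by (induction S rule: infinite_finite_induct) (auto simp: matrix_add_ldistrib)

lemma matrix_mult_sum_right: "sum f S ** A = (\<Sum>k\<in>S. f k ** A)"
  by (induction S rule: infinite_finite_induct) (auto simp: matrix_add_rdistrib)

lemma sum_matrix_vector_mult: "sum f S *v x = (\<Sum>k\<in>S. f k *v x)"
  by (induction S rule: infinite_finite_induct) (auto simp: matrix_vector_mult_add_rdistrib)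

lemma trace_sum: "trace (sum f S :: complex^'n::finite^'n) = (\<Sum>k\<in>S. trace (f k))"
  by (induction S rule: infinite_finite_induct) (auto simp: trace_add trace_0[unfolded mat_0])

lemma mult_cdiag_right: "(A ** cdiag d) $ i $ j = A $ i $ j * complex_of_real (d j)"
  by (simp add: matrix_matrix_mult_def cdiag_def mult_delta_right)

lemma mult_cdiag_left: "(cdiag d ** A) $ i $ j = complex_of_real (d i) * A $ i $ j"
  by (simp add: matrix_matrix_mult_def cdiag_def mult_delta_left)

lemma cdiag_mult: "cdiag d ** cdiag e = cdiag (\<lambda>i. d i * e i)"
  by (simp add: vec_eq_iff mult_cdiag_left) (simp add: cdiag_def)

lemma cdiag_const_1: "cdiag (\<lambda>i. 1) = mat 1"
  by (simp add: vec_eq_iff cdiag_def mat_def)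

lemma cscale_cdiag: "cscale (complex_of_real c) (cdiag d) = cdiag (\<lambda>i. c * d i)"
  by (simp add: vec_eq_iff cdiag_def)

lemma conj_diag_entry:
  "(V ** cdiag d ** adj W) $ i $ j = (\<Sum>k\<in>UNIV. V $ i $ k * complex_of_real (d k) * cnj (W $ j $ k))"
  by (simp add: matrix_matrix_mult_def[of "V ** cdiag d"] mult_cdiag_right)

lemma cscale_conj_diag:
  "cscale (complex_of_real c) (V ** cdiag d ** W) = V ** cdiag (\<lambda>i. c * d i) ** W"
  by (simp add: cscale_mult_left cscale_mult_right cscale_cdiag[symmetric])

lemma hermitian_conj_diag: "hermitian (V ** cdiag d ** adj V)"
  by (simp add: hermitian_def adj_mult matrix_mul_assoc)

lemma cinner_add_right: "cinner x (y + z) = cinner x y + cinner x z"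
  by (simp add: cinner_def algebra_simps sum.distrib)

lemma cinner_add_left: "cinner (x + y) z = cinner x z + cinner y z"
  by (simp add: cinner_def algebra_simps sum.distrib)

lemma cinner_diff_right: "cinner x (y - z) = cinner x y - cinner x z"
  by (simp add: cinner_def algebra_simps sum_subtractf)

lemma cinner_scale_right: "cinner x (c *s y) = c * cinner x y"
  by (simp add: cinner_def sum_distrib_left algebra_simps)

lemma cinner_scale_left: "cinner (c *s x) y = cnj c * cinner x y"
  by (simp add: cinner_def sum_distrib_left algebra_simps)

lemma cinner_commute: "cinner y x = cnj (cinner x y)"
  by (simp add: cinner_def mult.commute)

lemma cinner_zero_right [simp]: "cinner x 0 = 0"
  by (simp add: cinner_def)

lemma cinner_sum_right: "cinner x (sum f S) = (\<Sum>k\<in>S. cinner x (f k))"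
  by (induction S rule: infinite_finite_induct) (auto simp: cinner_add_right)

lemma scaleR_vec_eq_scalar_mult: "r *\<^sub>R (x :: complex^'n) = complex_of_real r *s x"
  by (simp add: vec_eq_iff) (simp add: scaleR_conv_of_real)

lemma cinner_self: "cinner x x = complex_of_real ((norm x)\<^sup>2)"
proof -
  have "cinner x x = (\<Sum>i\<in>UNIV. complex_of_real ((cmod (x $ i))\<^sup>2))"
    unfolding cinner_def by (intro sum.cong refl) (metis complex_norm_square mult.commute)
  also have "\<dots> = complex_of_real ((norm x)\<^sup>2)"
    by (simp add: norm_vec_def L2_set_def sum_nonneg)
  finally show ?thesis .
qed

lemma cinner_self_eq_0_iff: "cinner x x = 0 \<longleftrightarrow> x = 0"
  by (simp add: cinner_self)

lemma cinner_adj: "cinner x (A *v y) = cinner (adj A *v x) y"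
proof -
  have "cinner x (A *v y) = (\<Sum>i\<in>UNIV. \<Sum>j\<in>UNIV. cnj (x $ i) * A $ i $ j * y $ j)"
    by (simp add: cinner_def matrix_vector_mult_def sum_distrib_left mult.assoc)
  also have "\<dots> = (\<Sum>j\<in>UNIV. \<Sum>i\<in>UNIV. cnj (x $ i) * A $ i $ j * y $ j)"
    by (rule sum.swap)
  also have "\<dots> = cinner (adj A *v x) y"
    by (simp add: cinner_def matrix_vector_mult_def sum_distrib_left mult_ac)
  finally show ?thesis .
qed

lemma cinner_hermitian: "hermitian A \<Longrightarrow> cinner x (A *v y) = cinner (A *v x) y"
  by (metis cinner_adj hermitian_def)

lemma cinner_column_adj: "(adj W *v x) $ k = cinner (column k W) x"
  by (simp add: matrix_vector_mult_def cinner_def column_def)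

lemma matrix_mult_entry_column: "(M ** N) $ i $ j = (M *v column j N) $ i"
  by (simp add: matrix_matrix_mult_def matrix_vector_mult_def column_def)

section \<open>The spectral theorem\<close>

lemma exists_nonzero_orthogonal:
  fixes v :: "'n::finite \<Rightarrow> complex^'n"
  assumes "I \<noteq> UNIV"
  shows "\<exists>x. x \<noteq> 0 \<and> (\<forall>i\<in>I. cinner (v i) x = 0)"
proof (rule ccontr)
  assume no_orth: "\<not> ?thesis"
  define M :: "complex^'n^'n" where "M = (\<chi> r k. if r \<in> I then cnj (v r $ k) else 0)"
  have "(M *v x) $ r = (if r \<in> I then cinner (v r) x else 0)" for x r
    by (simp add: M_def matrix_vector_mult_def cinner_def)
  then have "M *v x = 0 \<Longrightarrow> x = 0" for x
    using no_orth by (metis vec_eq_iff zero_index)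
  then obtain B where "B ** M = mat 1"
    using matrix_left_invertible_ker by blast
  then have MB: "M ** B = mat 1"
    using matrix_left_right_inverse by blast
  obtain j where "j \<notin> I"
    using assms by blast
  then have "(M ** B) $ j $ j = 0"
    by (simp add: matrix_matrix_mult_def M_def)
  then show False
    using MB by (simp add: mat_def)
qed

lemma linear_plus_quadratic_nonpos_imp_zero:
  fixes a b :: real
  assumes "\<And>t. a * t + b * t\<^sup>2 \<le> 0"
  shows "a = 0"
proof (rule ccontr)
  assume "a \<noteq> 0"
  define t where "t = a / (\<bar>b\<bar> + 1)"
  have a_eq: "a = t * (\<bar>b\<bar> + 1)"
    unfolding t_def by (simp add: add_pos_nonneg)
  then have "t \<noteq> 0"
    using \<open>a \<noteq> 0\<close> by auto
  have "a * t + b * t\<^sup>2 = t\<^sup>2 * (\<bar>b\<bar> + 1 + b)"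
    by (subst a_eq) (simp add: power2_eq_square algebra_simps)
  moreover have "t\<^sup>2 * (\<bar>b\<bar> + 1 + b) > 0"
    using \<open>t \<noteq> 0\<close> by (intro mult_pos_pos) auto
  ultimately show False
    using assms[of t] by simp
qed

text \<open>Along \<open>v + t w\<close> the quadratic form stays below its maximum, so its first variation
  \<open>2 Re \<langle>w, A v\<rangle>\<close> vanishes.\<close>

lemma quadratic_form_maximizer_Re_orthogonal:
  fixes A :: "complex^'n::finite^'n"
  assumes herm: "hermitian A"
    and add: "\<And>x y. x \<in> W \<Longrightarrow> y \<in> W \<Longrightarrow> x + y \<in> W"
    and scale: "\<And>c x. x \<in> W \<Longrightarrow> c *s x \<in> W"
    and v: "v \<in> W" "cinner v v = 1"
    and max: "\<And>x. x \<in> W \<Longrightarrow> Re (cinner x (A *v x)) \<le> Re (cinner v (A *v v)) * (norm x)\<^sup>2"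
    and w: "w \<in> W" "cinner v w = 0"
  shows "Re (cinner w (A *v v)) = 0"
proof -
  define f where "f x = Re (cinner x (A *v x))" for x
  have wv: "cinner w v = 0"
    using w(2) by (metis cinner_commute complex_cnj_zero)
  have vAw: "cinner v (A *v w) = cnj (cinner w (A *v v))"
    by (metis cinner_commute cinner_hermitian herm)
  have "Re (cinner w (A *v v)) * (2 * t) + (f w - f v * (norm w)\<^sup>2) * t\<^sup>2 \<le> 0" for t
  proof -
    define x where "x = v + complex_of_real t *s w"
    have "x \<in> W"
      unfolding x_def using v w by (intro add scale)
    have "complex_of_real ((norm x)\<^sup>2) = 1 + complex_of_real (t\<^sup>2 * (norm w)\<^sup>2)"
      unfolding cinner_self[symmetric] x_def
      by (simp add: cinner_add_left cinner_add_right cinner_scale_left cinner_scale_right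
          w(2) wv v(2) cinner_self[of w] power2_eq_square)
    then have "(norm x)\<^sup>2 = 1 + t\<^sup>2 * (norm w)\<^sup>2"
      by (metis of_real_1 of_real_add of_real_eq_iff)
    moreover have "f x = f v + 2 * t * Re (cinner w (A *v v)) + t\<^sup>2 * f w"
      unfolding x_def f_def
      by (simp add: matrix_vector_right_distrib vector_scalar_commute cinner_add_left
          cinner_add_right cinner_scale_left cinner_scale_right vAw power2_eq_square
          algebra_simps)
    ultimately show ?thesis
      using max[OF \<open>x \<in> W\<close>] by (simp add: f_def algebra_simps)
  qed
  then have "2 * Re (cinner w (A *v v)) = 0"
    by (intro linear_plus_quadratic_nonpos_imp_zero[of _ "f w - f v * (norm w)\<^sup>2"])
      (simp add: algebra_simps)
  then show ?thesis
    by simp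
qed

lemma hermitian_quadratic_form_maximizer:
  fixes A :: "complex^'n::finite^'n"
  assumes herm: "hermitian A"
    and add: "\<And>x y. x \<in> W \<Longrightarrow> y \<in> W \<Longrightarrow> x + y \<in> W"
    and scale: "\<And>c x. x \<in> W \<Longrightarrow> c *s x \<in> W"
    and invariant: "\<And>x. x \<in> W \<Longrightarrow> A *v x \<in> W"
    and v: "v \<in> W" "cinner v v = 1"
    and max: "\<And>x. x \<in> W \<Longrightarrow> Re (cinner x (A *v x)) \<le> Re (cinner v (A *v v)) * (norm x)\<^sup>2"
  shows "A *v v = complex_of_real (Re (cinner v (A *v v))) *s v"
proof -
  have Re_orthogonal: "Re (cinner w (A *v v)) = 0" if "w \<in> W" "cinner v w = 0" for w
    using herm add scale v max that by (rule quadratic_form_maximizer_Re_orthogonal)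
  have orthogonal: "cinner w (A *v v) = 0" if "w \<in> W" "cinner v w = 0" for w
  proof -
    have "Re (cinner (\<i> *s w) (A *v v)) = 0"
      using that by (intro Re_orthogonal) (auto simp: scale cinner_scale_right)
    then show ?thesis
      using Re_orthogonal[OF that] by (simp add: cinner_scale_left complex_eq_iff)
  qed
  define c where "c = cinner v (A *v v)"
  have c_real: "c = complex_of_real (Re c)"
    using cinner_hermitian[OF herm, of v v] cinner_commute[of v "A *v v"]
    by (simp add: c_def complex_eq_iff)
  define w where "w = A *v v - c *s v"
  have "w \<in> W"
    using add[OF invariant[OF v(1)] scale[OF v(1), of "- c"]] by (simp add: w_def)
  moreover have "cinner v w = 0"
    by (simp add: w_def cinner_diff_right cinner_scale_right v(2) c_def)
  ultimately have "cinner w (A *v v) = 0" "cinner w v = 0"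
    using orthogonal by (auto simp: cinner_commute[of w v])
  moreover have "cinner w w = cinner w (A *v v) - c * cinner w v"
    using cinner_diff_right[of w "A *v v" "c *s v"] by (simp add: cinner_scale_right flip: w_def)
  ultimately have "w = 0"
    by (simp add: cinner_self_eq_0_iff)
  then show ?thesis
    using c_real by (simp add: w_def c_def)
qed

lemma quadratic_form_le_of_sphere_le:
  fixes A :: "complex^'n::finite^'n"
  assumes scale: "\<And>c x. x \<in> W \<Longrightarrow> c *s x \<in> W"
    and bound: "\<And>y. y \<in> sphere 0 1 \<inter> W \<Longrightarrow> Re (cinner y (A *v y)) \<le> M"
    and "x \<in> W"
  shows "Re (cinner x (A *v x)) \<le> M * (norm x)\<^sup>2"
proof (cases "x = 0")
  case True
  then show ?thesis
    by simp
next
  case False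
  define c where "c = 1 / norm x"
  have "c *\<^sub>R x \<in> W"
    using \<open>x \<in> W\<close> by (simp add: scale scaleR_vec_eq_scalar_mult)
  moreover have "c *\<^sub>R x \<in> sphere 0 1"
    using False by (simp add: c_def)
  ultimately have "Re (cinner (c *\<^sub>R x) (A *v (c *\<^sub>R x))) \<le> M"
    by (intro bound) blast
  moreover have "Re (cinner (c *\<^sub>R x) (A *v (c *\<^sub>R x))) = c\<^sup>2 * Re (cinner x (A *v x))"
    by (simp add: scaleR_vec_eq_scalar_mult vector_scalar_commute cinner_scale_left
        cinner_scale_right power2_eq_square)
  ultimately have "(norm x)\<^sup>2 * (c\<^sup>2 * Re (cinner x (A *v x))) \<le> (norm x)\<^sup>2 * M"
    by (intro mult_left_mono) simp_all
  then show ?thesis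
    using False by (simp add: c_def power_divide mult.commute)
qed

lemma quadratic_form_attains_max:
  fixes A :: "complex^'n::finite^'n"
  assumes "closed W" and scale: "\<And>c x. x \<in> W \<Longrightarrow> c *s x \<in> W" and "x0 \<in> W" "x0 \<noteq> 0"
  obtains v where "v \<in> W" "cinner v v = 1"
    "\<And>x. x \<in> W \<Longrightarrow> Re (cinner x (A *v x)) \<le> Re (cinner v (A *v v)) * (norm x)\<^sup>2"
proof -
  have "sgn x0 \<in> W"
    using scale[OF \<open>x0 \<in> W\<close>, of "complex_of_real (inverse (norm x0))"]
    by (simp add: sgn_div_norm divide_inverse_commute scaleR_vec_eq_scalar_mult)
  moreover have "sgn x0 \<in> sphere 0 1"
    using \<open>x0 \<noteq> 0\<close> by (simp add: norm_sgn)
  ultimately have nonempty: "sphere 0 1 \<inter> W \<noteq> {}"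
    by blast
  define f where "f x = Re (cinner x (A *v x))" for x
  have "continuous_on (sphere 0 1 \<inter> W) f"
    unfolding f_def cinner_def matrix_vector_mult_def
    by (simp; intro continuous_intros linear_continuous_on bounded_linear_vec_nth)
  then obtain v where v: "v \<in> sphere 0 1 \<inter> W" and v_max: "\<And>y. y \<in> sphere 0 1 \<inter> W \<Longrightarrow> f y \<le> f v"
    using continuous_attains_sup[OF compact_Int_closed[OF compact_sphere \<open>closed W\<close>] nonempty]
    by metis
  moreover have "cinner v v = 1"
    using v by (simp add: cinner_self)
  ultimately show ?thesis
    using that quadratic_form_le_of_sphere_le[OF scale v_max[unfolded f_def]] by blast
qed

lemma hermitian_eigenvector_orthogonal:
  fixes A :: "complex^'n::finite^'n" and v :: "'n \<Rightarrow> complex^'n"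
  assumes herm: "hermitian A" and "I \<noteq> UNIV"
    and eig: "\<And>i. i \<in> I \<Longrightarrow> A *v v i = complex_of_real (d i) *s v i"
  shows "\<exists>x l. cinner x x = 1 \<and> (\<forall>i\<in>I. cinner (v i) x = 0) \<and> A *v x = complex_of_real l *s x"
proof -
  define W where "W = {x. \<forall>i\<in>I. cinner (v i) x = 0}"
  have add: "x + y \<in> W" if "x \<in> W" "y \<in> W" for x y
    using that by (simp add: W_def cinner_add_right)
  have scale: "c *s x \<in> W" if "x \<in> W" for x c
    using that by (simp add: W_def cinner_scale_right)
  have invariant: "A *v x \<in> W" if "x \<in> W" for x
    using that eig by (simp add: W_def cinner_hermitian[OF herm] cinner_scale_left)
  have "continuous_on UNIV (\<lambda>x. cinner (v i) x)" for i
    unfolding cinner_def by (intro continuous_intros linear_continuous_on bounded_linear_vec_nth)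
  then have "closed {x. cinner (v i) x = 0}" for i
    by (intro closed_Collect_eq) auto
  moreover have "W = (\<Inter>i\<in>I. {x. cinner (v i) x = 0})"
    by (auto simp: W_def)
  ultimately have "closed W"
    by auto
  obtain x0 where "x0 \<noteq> 0" "x0 \<in> W"
    using exists_nonzero_orthogonal[OF \<open>I \<noteq> UNIV\<close>, of v] unfolding W_def by blast
  then obtain u where u: "u \<in> W" "cinner u u = 1"
    and max: "\<And>x. x \<in> W \<Longrightarrow> Re (cinner x (A *v x)) \<le> Re (cinner u (A *v u)) * (norm x)\<^sup>2"
    using quadratic_form_attains_max[OF \<open>closed W\<close> scale] by blast
  then have "A *v u = complex_of_real (Re (cinner u (A *v u))) *s u"
    by (intro hermitian_quadratic_form_maximizer[OF herm add scale invariant])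
  then show ?thesis
    using u unfolding W_def by blast
qed

lemma hermitian_orthonormal_eigenvectors:
  fixes A :: "complex^'n::finite^'n"
  assumes herm: "hermitian A"
  shows "\<exists>(v :: 'n \<Rightarrow> complex^'n) d. (\<forall>i j. cinner (v i) (v j) = (if i = j then 1 else 0))
           \<and> (\<forall>i. A *v v i = complex_of_real (d i) *s v i)"
proof -
  have "\<exists>(v :: 'n \<Rightarrow> complex^'n) d. (\<forall>i\<in>I. \<forall>j\<in>I. cinner (v i) (v j) = (if i = j then 1 else 0))
           \<and> (\<forall>i\<in>I. A *v v i = complex_of_real (d i) *s v i)" for I :: "'n set"
    using finite[of I]
  proof (induction rule: finite_induct)
    case empty
    show ?case
      by simp
  next
    case (insert j I)
    then obtain v d where orth: "\<forall>i\<in>I. \<forall>k\<in>I. cinner (v i) (v k) = (if i = k then 1 else 0)"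
      and eig: "\<forall>i\<in>I. A *v v i = complex_of_real (d i) *s v i"
      by blast
    have "I \<noteq> UNIV"
      using insert.hyps by blast
    then obtain x l where x: "cinner x x = 1" "\<forall>i\<in>I. cinner (v i) x = 0"
      "A *v x = complex_of_real l *s x"
      using hermitian_eigenvector_orthogonal[OF herm, of I v d] eig by blast
    have "cinner x (v i) = 0" if "i \<in> I" for i
      using x(2) that by (metis cinner_commute complex_cnj_zero)
    then show ?case
      using orth eig x insert.hyps
      by (intro exI[of _ "v(j := x)"] exI[of _ "d(j := l)"]) auto
  qed
  from this[of UNIV] show ?thesis
    by simp
qed

lemma hermitian_unitary_diagonalization:
  fixes A :: "complex^'n::finite^'n"
  assumes "hermitian A"
  shows "\<exists>V d. unitary V \<and> A = V ** cdiag d ** adj V"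
proof -
  obtain v :: "'n \<Rightarrow> complex^'n" and d
    where orth: "\<And>i j. cinner (v i) (v j) = (if i = j then 1 else 0)"
      and eig: "\<And>i. A *v v i = complex_of_real (d i) *s v i"
    using hermitian_orthonormal_eigenvectors[OF assms] by blast
  define V :: "complex^'n^'n" where "V = (\<chi> r c. v c $ r)"
  have "(adj V ** V) $ i $ j = cinner (v i) (v j)" for i j
    by (simp add: V_def matrix_matrix_mult_def cinner_def)
  then have VV: "adj V ** V = mat 1"
    using orth by (simp add: vec_eq_iff mat_def)
  then have VV': "V ** adj V = mat 1"
    using matrix_left_right_inverse by blast
  have "(A ** V) $ r $ c = (A *v v c) $ r" for r c
    by (simp add: V_def matrix_matrix_mult_def matrix_vector_mult_def)
  then have AV: "A ** V = V ** cdiag d"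
    by (simp add: vec_eq_iff mult_cdiag_right eig V_def mult.commute)
  have "A = A ** (V ** adj V)"
    using VV' by simp
  also have "\<dots> = V ** cdiag d ** adj V"
    by (simp add: matrix_mul_assoc AV)
  finally show ?thesis
    using VV VV' unfolding unitary_def by blast
qed

section \<open>Functional calculus\<close>

lemma unitaryD1: "unitary V \<Longrightarrow> adj V ** V = mat 1"
  by (simp add: unitary_def)

lemma unitaryD2: "unitary V \<Longrightarrow> V ** adj V = mat 1"
  by (simp add: unitary_def)

lemma unitary_columns_orthonormal:
  assumes "unitary V"
  shows "cinner (column k V) (column m V) = (if k = m then 1 else 0)"
proof -
  have "(adj V ** V) $ k $ m = (if k = m then 1 else 0)"
    using assms by (simp add: unitary_def mat_def)
  then show ?thesis
    by (simp add: matrix_mult_entry_column cinner_column_adj)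
qed

lemma cinner_conj_diag:
  "cinner x ((V ** cdiag f ** adj V) *v y) =
     (\<Sum>k\<in>UNIV. complex_of_real (f k) * cnj (cinner (column k V) x) * cinner (column k V) y)"
proof -
  have "cinner x ((V ** cdiag f ** adj V) *v y) = cinner x (V *v (cdiag f *v (adj V *v y)))"
    by (simp add: matrix_vector_mul_assoc matrix_mul_assoc)
  also have "\<dots> = cinner (adj V *v x) (cdiag f *v (adj V *v y))"
    by (rule cinner_adj)
  also have "\<dots> = (\<Sum>k\<in>UNIV. complex_of_real (f k) * cnj (cinner (column k V) x) * cinner (column k V) y)"
    by (simp add: cinner_def matrix_vector_mult_def cdiag_def mult_delta_left
        cinner_column_adj[unfolded matrix_vector_mult_def] column_def mult_ac)
  finally show ?thesis .
qed

lemma quadratic_form_conj_diag: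
  "cinner x ((V ** cdiag f ** adj V) *v x) =
     complex_of_real (\<Sum>k\<in>UNIV. f k * (cmod (cinner (column k V) x))\<^sup>2)"
  by (simp add: cinner_conj_diag mult.assoc complex_norm_square[symmetric] mult.commute[of "cnj _"])

lemma quadratic_form_conj_diag_column:
  assumes "unitary V"
  shows "cinner (column a V) ((V ** cdiag f ** adj V) *v column a V) = complex_of_real (f a)"
proof -
  have "(cmod (cinner (column k V) (column a V)))\<^sup>2 = (if k = a then 1 else 0)" for k
    by (simp add: unitary_columns_orthonormal[OF assms])
  then show ?thesis
    by (simp only: quadratic_form_conj_diag mult_delta_right mult_1_right) simp
qed

lemma cinner_expand_unitary:
  assumes "unitary V"
  shows "cinner x y = (\<Sum>k\<in>UNIV. cnj (cinner (column k V) x) * cinner (column k V) y)"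
proof -
  have "V ** cdiag (\<lambda>k. 1) ** adj V = mat 1"
    using assms by (simp add: unitary_def cdiag_const_1)
  then show ?thesis
    using cinner_conj_diag[of x V "\<lambda>k. 1" y] by simp
qed

lemma norm_expand_unitary:
  assumes "unitary V"
  shows "(\<Sum>k\<in>UNIV. (cmod (cinner (column k V) x))\<^sup>2) = Re (cinner x x)"
proof -
  have "cnj z * z = complex_of_real ((cmod z)\<^sup>2)" for z
    by (metis complex_norm_square mult.commute)
  then have "cinner x x = complex_of_real (\<Sum>k\<in>UNIV. (cmod (cinner (column k V) x))\<^sup>2)"
    using cinner_expand_unitary[OF assms, of x x] by simp
  then show ?thesis
    by simp
qed

lemma trace_conj_diag_mult:
  "trace (V ** cdiag d ** adj V ** X) =
     (\<Sum>a\<in>UNIV. complex_of_real (d a) * cinner (column a V) (X *v column a V))"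
proof -
  have "trace (V ** cdiag d ** adj V ** X) = trace (V ** (cdiag d ** (adj V ** X)))"
    by (simp add: matrix_mul_assoc)
  also have "\<dots> = trace ((cdiag d ** (adj V ** X)) ** V)"
    by (rule trace_mul_sym)
  also have "\<dots> = trace (cdiag d ** (adj V ** X ** V))"
    by (simp add: matrix_mul_assoc)
  also have "\<dots> = (\<Sum>a\<in>UNIV. complex_of_real (d a) * (adj V ** X ** V) $ a $ a)"
    by (simp add: trace_def mult_cdiag_left)
  also have "\<dots> = (\<Sum>a\<in>UNIV. complex_of_real (d a) * cinner (column a V) (X *v column a V))"
    by (simp add: matrix_mult_entry_column matrix_vector_mul_assoc[symmetric] cinner_column_adj)
  finally show ?thesis .
qed

lemma trace_conj_diag:
  assumes "unitary V"
  shows "trace (V ** cdiag d ** adj V) = complex_of_real (sum d UNIV)"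
  using trace_conj_diag_mult[of V d "mat 1"]
  by (simp add: unitary_columns_orthonormal[OF assms])

lemma conj_diag_mult:
  assumes "unitary V"
  shows "(V ** cdiag f ** adj V) ** (V ** cdiag g ** adj V) = V ** cdiag (\<lambda>k. f k * g k) ** adj V"
proof -
  have "(V ** cdiag f ** adj V) ** (V ** cdiag g ** adj V) = V ** cdiag f ** (adj V ** V) ** cdiag g ** adj V"
    by (simp add: matrix_mul_assoc)
  also have "\<dots> = V ** (cdiag f ** cdiag g) ** adj V"
    using assms by (simp add: unitary_def matrix_mul_assoc)
  finally show ?thesis
    by (simp add: cdiag_mult)
qed

lemma conj_diag_shift:
  assumes "unitary V"
  shows "V ** cdiag (\<lambda>k. d k + t) ** adj V = V ** cdiag d ** adj V + cscale (complex_of_real t) (mat 1)"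
proof -
  have "cdiag (\<lambda>k. d k + t) = cdiag d + cscale (complex_of_real t) (mat 1)"
    by (simp add: vec_eq_iff cdiag_def mat_def)
  then show ?thesis
    using assms by (simp add: unitary_def matrix_add_ldistrib matrix_add_rdistrib
        cscale_mult_left cscale_mult_right)
qed

text \<open>The choice made by \<^const>\<open>mat_fun\<close> is irrelevant: two diagonalizations of the same
  matrix are intertwined by a unitary that commutes with every function of the eigenvalues.\<close>

lemma mat_fun_conj_diag:
  assumes U: "unitary V"
  shows "mat_fun f (V ** cdiag d ** adj V) = V ** cdiag (f \<circ> d) ** adj V"
proof -
  let ?A = "V ** cdiag d ** adj V"
  let ?P = "\<lambda>B. \<exists>V d. unitary V \<and> ?A = V ** cdiag d ** adj V \<and> B = V ** cdiag (f \<circ> d) ** adj V"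
  have "?P (V ** cdiag (f \<circ> d) ** adj V)"
    using U by blast
  then have "?P (mat_fun f ?A)"
    unfolding mat_fun_def by (rule someI)
  then obtain V' d' where U': "unitary V'" and A': "?A = V' ** cdiag d' ** adj V'"
    and B: "mat_fun f ?A = V' ** cdiag (f \<circ> d') ** adj V'"
    by blast
  define X where "X = adj V' ** V"
  have "X ** cdiag d = adj V' ** ?A ** V"
    unfolding X_def using unitaryD1[OF U] by (metis matrix_mul_assoc matrix_mul_rid)
  also have "\<dots> = cdiag d' ** X"
    unfolding X_def A' using unitaryD1[OF U'] by (metis matrix_mul_assoc matrix_mul_lid)
  finally have "X $ i $ j * complex_of_real (d j) = complex_of_real (d' i) * X $ i $ j" for i j
    by (metis mult_cdiag_left mult_cdiag_right)
  then have "X $ i $ j = 0 \<or> d j = d' i" for i j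
    by (auto simp: mult.commute)
  then have "X $ i $ j * complex_of_real (f (d j)) = complex_of_real (f (d' i)) * X $ i $ j" for i j
    by (metis mult.commute mult_zero_left)
  then have "X ** cdiag (f \<circ> d) = cdiag (f \<circ> d') ** X"
    by (simp add: vec_eq_iff mult_cdiag_left mult_cdiag_right)
  then have "V' ** cdiag (f \<circ> d') ** adj V' = V' ** (X ** cdiag (f \<circ> d)) ** adj V"
    unfolding X_def using unitaryD2[OF U] by (metis matrix_mul_assoc matrix_mul_rid)
  also have "\<dots> = V ** cdiag (f \<circ> d) ** adj V"
    unfolding X_def using unitaryD2[OF U'] by (metis matrix_mul_assoc matrix_mul_lid)
  finally show ?thesis
    using B by simp
qed

definition posdef :: "'n::finite cmat \<Rightarrow> bool" where
  "posdef A \<longleftrightarrow> hermitian A \<and> (\<forall>v. v \<noteq> 0 \<longrightarrow> 0 < Re (cinner v (A *v v)))"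

lemma posdef_imp_psd:
  assumes "posdef A"
  shows "psd A"
  unfolding psd_def
proof (intro conjI allI)
  show "hermitian A"
    using assms by (simp add: posdef_def)
  show "0 \<le> Re (cinner v (A *v v))" for v
    using assms by (cases "v = 0") (auto simp: posdef_def less_imp_le)
qed

lemma psd_unitary_diagonalization:
  assumes "psd A"
  obtains V d where "unitary V" "A = V ** cdiag d ** adj V" "\<And>i. 0 \<le> d i"
proof -
  have "hermitian A"
    using assms by (simp add: psd_def)
  then obtain V d where V: "unitary V" and A: "A = V ** cdiag d ** adj V"
    using hermitian_unitary_diagonalization by blast
  have "0 \<le> d i" for i
  proof -
    have "0 \<le> Re (cinner (column i V) (A *v column i V))"
      using assms by (simp add: psd_def)
    then show ?thesis
      by (simp add: A quadratic_form_conj_diag_column[OF V])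
  qed
  then show ?thesis
    using that V A by blast
qed

lemma posdef_unitary_diagonalization:
  assumes "posdef A"
  obtains V d where "unitary V" "A = V ** cdiag d ** adj V" "\<And>i. 0 < d i"
proof -
  have "hermitian A"
    using assms by (simp add: posdef_def)
  then obtain V d where V: "unitary V" and A: "A = V ** cdiag d ** adj V"
    using hermitian_unitary_diagonalization by blast
  have "column i V \<noteq> 0" for i
    using unitary_columns_orthonormal[OF V, of i i] by auto
  then have "0 < d i" for i
  proof -
    have "0 < Re (cinner (column i V) (A *v column i V))"
      using assms \<open>column i V \<noteq> 0\<close> by (simp add: posdef_def)
    then show ?thesis
      by (simp add: A quadratic_form_conj_diag_column[OF V])
  qed
  then show ?thesis
    using that V A by blast
qed

lemma posdef_conj_diag:
  fixes V :: "complex^'n::finite^'n"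
  assumes V: "unitary V" and d: "\<And>i. 0 < d i"
  shows "posdef (V ** cdiag d ** adj V)"
  unfolding posdef_def
proof (intro conjI allI impI hermitian_conj_diag)
  fix x :: "complex^'n" assume "x \<noteq> 0"
  then have "0 < (\<Sum>k\<in>UNIV. (cmod (cinner (column k V) x))\<^sup>2)"
    by (simp add: norm_expand_unitary[OF V] cinner_self)
  then obtain k where "cinner (column k V) x \<noteq> 0"
    by (metis (mono_tags, lifting) norm_zero sum.neutral zero_power2 less_irrefl)
  then have "0 < (\<Sum>k\<in>UNIV. d k * (cmod (cinner (column k V) x))\<^sup>2)"
    using d by (intro sum_pos2[of _ k]) (simp_all add: less_imp_le)
  then show "0 < Re (cinner x ((V ** cdiag d ** adj V) *v x))"
    by (simp add: quadratic_form_conj_diag)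
qed

lemma posdef_cscale:
  assumes "posdef A" "0 < c"
  shows "posdef (cscale (complex_of_real c) A)"
proof -
  obtain V d where "unitary V" "A = V ** cdiag d ** adj V" "\<And>i. 0 < d i"
    using posdef_unitary_diagonalization[OF assms(1)] by blast
  then show ?thesis
    using assms(2) by (simp add: cscale_conj_diag posdef_conj_diag)
qed

lemma posdef_supp:
  assumes "posdef A"
  shows "supp A = UNIV"
proof -
  obtain V d where V: "unitary V" and A: "A = V ** cdiag d ** adj V" and d: "\<And>i. 0 < d i"
    using posdef_unitary_diagonalization[OF assms] by blast
  have "A ** (V ** cdiag (\<lambda>i. 1 / d i) ** adj V) = mat 1"
    using d V by (simp add: A conj_diag_mult cdiag_const_1 unitary_def less_imp_neq[symmetric])
  then have "y = A *v ((V ** cdiag (\<lambda>i. 1 / d i) ** adj V) *v y)" for y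
    by (simp add: matrix_vector_mul_assoc)
  then show ?thesis
    unfolding supp_def by blast
qed

lemma posdef_trace:
  assumes "posdef A"
  shows "trace A = complex_of_real (Re (trace A))" "0 < Re (trace A)"
proof -
  obtain V d where V: "unitary V" and A: "A = V ** cdiag d ** adj V" and d: "\<And>i. 0 < d i"
    using posdef_unitary_diagonalization[OF assms] by blast
  then show "trace A = complex_of_real (Re (trace A))" "0 < Re (trace A)"
    by (simp_all add: trace_conj_diag sum_pos)
qed

lemma mat_ln_cscale:
  assumes "posdef A" "0 < c"
  shows "mat_ln (cscale (complex_of_real c) A) = mat_ln A + cscale (complex_of_real (ln c)) (mat 1)"
proof -
  obtain V d where V: "unitary V" and A: "A = V ** cdiag d ** adj V" and d: "\<And>i. 0 < d i"
    using posdef_unitary_diagonalization[OF assms(1)] by blast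
  have "ln \<circ> (\<lambda>i. c * d i) = (\<lambda>i. (ln \<circ> d) i + ln c)"
    using d assms(2) by (simp add: fun_eq_iff ln_mult_pos)
  then show ?thesis
    by (simp add: A cscale_conj_diag mat_fun_conj_diag[OF V] conj_diag_shift[OF V] o_def)
qed

definition kraus_map :: "('k::finite \<Rightarrow> complex^'n::finite^'m::finite) \<Rightarrow> 'n cmat \<Rightarrow> 'm cmat" where
  "kraus_map K X = (\<Sum>k\<in>UNIV. K k ** X ** adj (K k))"

definition kraus_dual :: "('k::finite \<Rightarrow> complex^'n::finite^'m::finite) \<Rightarrow> 'm cmat \<Rightarrow> 'n cmat" where
  "kraus_dual K Y = (\<Sum>k\<in>UNIV. adj (K k) ** Y ** K k)"

lemma trace_kraus_map_mult: "trace (kraus_map K X ** Y) = trace (X ** kraus_dual K Y)"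
proof -
  have "trace (kraus_map K X ** Y) = (\<Sum>k\<in>UNIV. trace (K k ** (X ** adj (K k) ** Y)))"
    by (simp add: kraus_map_def matrix_mult_sum_right trace_sum matrix_mul_assoc)
  also have "\<dots> = (\<Sum>k\<in>UNIV. trace ((X ** adj (K k) ** Y) ** K k))"
    by (simp add: trace_mul_sym[of "K _"])
  also have "\<dots> = trace (X ** kraus_dual K Y)"
    by (simp add: kraus_dual_def matrix_mult_sum_left trace_sum matrix_mul_assoc)
  finally show ?thesis .
qed

lemma trace_mult_eqI:
  fixes Z Z' :: "complex^'n::finite^'n"
  assumes "\<And>X. trace (X ** Z) = trace (X ** Z')"
  shows "Z = Z'"
proof -
  have "Z $ a $ b = Z' $ a $ b" for a b
  proof -
    define X :: "complex^'n^'n" where "X = (\<chi> r c. if c = a then if r = b then 1 else 0 else 0)"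
    have "trace (X ** Y) = Y $ a $ b" for Y :: "complex^'n^'n"
      by (simp add: X_def trace_def matrix_matrix_mult_def mult_delta_left)
    then show ?thesis
      using assms[of X] by simp
  qed
  then show ?thesis
    by (simp add: vec_eq_iff)
qed

lemma trace_dual_kraus_map: "trace_dual (kraus_map K) = kraus_dual K"
proof
  fix Y
  show "trace_dual (kraus_map K) Y = kraus_dual K Y"
    unfolding trace_dual_def
  proof (rule the_equality)
    show "\<forall>X. trace (kraus_map K X ** Y) = trace (X ** kraus_dual K Y)"
      by (simp add: trace_kraus_map_mult)
    show "Z = kraus_dual K Y" if "\<forall>X. trace (kraus_map K X ** Y) = trace (X ** Z)" for Z
      using that by (intro trace_mult_eqI) (simp add: trace_kraus_map_mult)
  qed
qed

lemma kraus_dual_unital: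
  assumes "\<And>X. trace (kraus_map K X) = trace X"
  shows "kraus_dual K (mat 1) = mat 1"
proof (rule trace_mult_eqI)
  show "trace (X ** kraus_dual K (mat 1)) = trace (X ** mat 1)" for X
    using assms[of X] trace_kraus_map_mult[of K X "mat 1"] by simp
qed

lemma cinner_kraus_dual:
  "cinner x (kraus_dual K Y *v y) = (\<Sum>k\<in>UNIV. cinner (K k *v x) (Y *v (K k *v y)))"
  by (simp add: kraus_dual_def sum_matrix_vector_mult cinner_sum_right cinner_adj
      matrix_vector_mul_assoc[symmetric])

lemma kraus_dual_add: "kraus_dual K (A + B) = kraus_dual K A + kraus_dual K B"
  by (simp add: kraus_dual_def matrix_add_ldistrib matrix_add_rdistrib sum.distrib)

lemma kraus_dual_diff: "kraus_dual K (A - B) = kraus_dual K A - kraus_dual K B"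
  by (simp add: kraus_dual_def matrix_diff_ldistrib matrix_diff_rdistrib sum_subtractf)

lemma kraus_dual_cscale: "kraus_dual K (cscale c A) = cscale c (kraus_dual K A)"
  by (simp add: kraus_dual_def cscale_mult_left cscale_mult_right cscale_sum)

lemma hermitian_kraus_dual: "hermitian Y \<Longrightarrow> hermitian (kraus_dual K Y)"
  by (simp add: hermitian_def kraus_dual_def adj_sum adj_mult matrix_mul_assoc)

lemma posdef_kraus_dual:
  assumes A: "posdef A" and unital: "kraus_dual K (mat 1) = mat 1"
  shows "posdef (kraus_dual K A)"
proof -
  have "0 < Re (cinner x (kraus_dual K A *v x))" if "x \<noteq> 0" for x
  proof -
    have nonneg: "0 \<le> Re (cinner (K k *v x) (A *v (K k *v x)))" for k
      using posdef_imp_psd[OF A] by (simp add: psd_def)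
    have "\<exists>k. K k *v x \<noteq> 0"
    proof (rule ccontr)
      assume "\<not> (\<exists>k. K k *v x \<noteq> 0)"
      then have "cinner x (kraus_dual K (mat 1) *v x) = 0"
        by (simp add: cinner_kraus_dual)
      then show False
        using that unital by (simp add: cinner_self_eq_0_iff)
    qed
    then obtain k where "K k *v x \<noteq> 0" ..
    then have "0 < Re (cinner (K k *v x) (A *v (K k *v x)))"
      using A by (simp add: posdef_def)
    then have "0 < (\<Sum>k\<in>UNIV. Re (cinner (K k *v x) (A *v (K k *v x))))"
      using nonneg by (intro sum_pos2) auto
    then show ?thesis
      by (simp add: cinner_kraus_dual)
  qed
  then show ?thesis
    using A by (simp add: posdef_def hermitian_kraus_dual)
qed

lemma kraus_map_comp: "kraus_map K (kraus_map L X) = kraus_map (\<lambda>(k, l). K k ** L l) X"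
  by (simp add: kraus_map_def matrix_mult_sum_left matrix_mult_sum_right adj_mult matrix_mul_assoc
      sum.cartesian_product split_def)

lemma kraus_map_conj: "A ** kraus_map L X ** adj A = kraus_map (\<lambda>l. A ** L l) X"
  by (simp add: kraus_map_def matrix_mult_sum_left matrix_mult_sum_right adj_mult matrix_mul_assoc)

section \<open>The channel in Kraus form\<close>

text \<open>In Dirac notation, \<^term>\<open>partial_bra i\<close> is \<open>\<langle>i| \<otimes> 1\<close> and
  \<^term>\<open>partial_ket v\<close> is \<open>|v\<rangle> \<otimes> 1\<close>.\<close>

definition partial_bra :: "'s::finite \<Rightarrow> complex^('s \<times> 'a::finite)^'a" where
  "partial_bra i = (\<chi> j p. if p = (i, j) then 1 else 0)"

definition partial_ket :: "complex^'s::finite \<Rightarrow> complex^'a::finite^('s \<times> 'a)" where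
  "partial_ket v = (\<chi> p b. if snd p = b then v $ fst p else 0)"

definition outer :: "complex^'n::finite \<Rightarrow> complex^'m::finite \<Rightarrow> complex^'m^'n" where
  "outer v w = (\<chi> i j. v $ i * cnj (w $ j))"

lemma partial_bra_entry: "partial_bra i $ j $ p = (if p = (i, j) then 1 else 0)"
  by (simp add: partial_bra_def)

lemma adj_partial_bra_entry: "adj (partial_bra i) $ p $ j = (if p = (i, j) then 1 else 0)"
  by (simp add: partial_bra_def)

lemma partial_ket_entry: "partial_ket v $ p $ b = (if snd p = b then v $ fst p else 0)"
  by (simp add: partial_ket_def)

lemma adj_partial_ket_entry: "adj (partial_ket v) $ b $ p = (if snd p = b then cnj (v $ fst p) else 0)"
  by (simp add: partial_ket_def)

lemma ptrace_S_eq_kraus_map: "ptrace_S M = kraus_map partial_bra M"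
proof -
  have "(partial_bra i ** M ** adj (partial_bra i)) $ j $ l = M $ (i, j) $ (i, l)" for i j l
    by (simp add: matrix_matrix_mult_def partial_bra_entry adj_partial_bra_entry
        mult_delta_left mult_delta_right del: adj_entry)
  then show ?thesis
    by (simp add: vec_eq_iff ptrace_S_def kraus_map_def sum_component)
qed

lemma kron_outer: "kron (outer v w) X = partial_ket v ** X ** adj (partial_ket w)"
  by (simp add: vec_eq_iff kron_def outer_def matrix_matrix_mult_def partial_ket_entry
      adj_partial_ket_entry mult_delta_left mult_delta_right mult_ac del: adj_entry)

lemma kron_sum_left: "kron (sum A S) X = (\<Sum>m\<in>S. kron (A m) X)"
  by (simp add: vec_eq_iff kron_def sum_component sum_distrib_right)

lemma psd_outer_decomposition:
  assumes "psd \<rho>"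
  shows "\<exists>u :: 'n::finite \<Rightarrow> complex^'n. \<rho> = (\<Sum>m\<in>UNIV. outer (u m) (u m))"
proof -
  obtain V d where V: "unitary V" and \<rho>: "\<rho> = V ** cdiag d ** adj V" and d: "\<And>i. 0 \<le> d i"
    using psd_unitary_diagonalization[OF assms] by blast
  define u where "u m = complex_of_real (sqrt (d m)) *s column m V" for m
  have "complex_of_real (d m) = complex_of_real (sqrt (d m)) * complex_of_real (sqrt (d m))" for m
    using d[of m] by (simp flip: of_real_mult)
  then have "(\<Sum>m\<in>UNIV. outer (u m) (u m)) $ i $ j = \<rho> $ i $ j" for i j
    by (simp add: \<rho> conj_diag_entry u_def outer_def column_def sum_component mult_ac)
  then have "\<rho> = (\<Sum>m\<in>UNIV. outer (u m) (u m))"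
    by (simp add: vec_eq_iff)
  then show ?thesis
    by blast
qed

lemma channel_eq_kraus_map:
  fixes U :: "complex^('s::finite \<times> 'a::finite)^('s \<times> 'a)"
  assumes "\<rho>0 = (\<Sum>m\<in>UNIV. outer (u m) (u m))"
  shows "channel \<rho>0 U = kraus_map (\<lambda>(i, m). partial_bra i ** U ** partial_ket (u m))"
proof
  fix X :: "'a cmat"
  have "kron \<rho>0 X = kraus_map (\<lambda>m. partial_ket (u m)) X"
    by (simp add: assms kron_sum_left kron_outer kraus_map_def)
  then show "channel \<rho>0 U X = kraus_map (\<lambda>(i, m). partial_bra i ** U ** partial_ket (u m)) X"
    by (simp add: channel_def ptrace_S_eq_kraus_map kraus_map_conj kraus_map_comp
        matrix_mul_assoc case_prod_beta)
qed

lemma trace_ptrace_S: "trace (ptrace_S M) = trace M"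
proof -
  have "trace (ptrace_S M) = (\<Sum>j\<in>UNIV. \<Sum>i\<in>UNIV. M $ (i, j) $ (i, j))"
    by (simp add: trace_def ptrace_S_def)
  also have "\<dots> = (\<Sum>i\<in>UNIV. \<Sum>j\<in>UNIV. M $ (i, j) $ (i, j))"
    by (rule sum.swap)
  also have "\<dots> = trace M"
    by (simp add: trace_def sum.cartesian_product)
  finally show ?thesis .
qed

lemma trace_kron: "trace (kron A B) = trace A * trace B"
proof -
  have "trace (kron A B) = (\<Sum>p\<in>UNIV \<times> UNIV. A $ fst p $ fst p * B $ snd p $ snd p)"
    by (simp add: trace_def kron_def)
  also have "\<dots> = trace A * trace B"
    by (simp add: sum.cartesian_product case_prod_beta trace_def sum_product)
  finally show ?thesis .
qed

lemma trace_unitary_conj: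
  assumes "unitary U"
  shows "trace (U ** M ** adj U) = trace M"
proof -
  have "trace (U ** M ** adj U) = trace (M ** adj U ** U)"
    using trace_mul_sym[of U "M ** adj U"] by (simp add: matrix_mul_assoc)
  also have "\<dots> = trace M"
    using unitaryD1[OF assms] by (simp flip: matrix_mul_assoc)
  finally show ?thesis .
qed

lemma trace_channel:
  assumes "trace \<rho>0 = 1" "unitary U"
  shows "trace (channel \<rho>0 U X) = trace X"
  using assms by (simp add: channel_def trace_ptrace_S trace_unitary_conj trace_kron)

lemma channel_unital_kraus_form:
  fixes \<rho>0 :: "complex^'s::finite^'s" and U :: "complex^('s \<times> 'a::finite)^('s \<times> 'a)"
  assumes "density \<rho>0" "unitary U"
  obtains K :: "'s \<times> 's \<Rightarrow> 'a cmat"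
  where "channel \<rho>0 U = kraus_map K" "kraus_dual K (mat 1) = mat 1"
proof -
  obtain u :: "'s \<Rightarrow> complex^'s" where "\<rho>0 = (\<Sum>m\<in>UNIV. outer (u m) (u m))"
    using assms(1) psd_outer_decomposition by (auto simp: density_def)
  then have channel: "channel \<rho>0 U = kraus_map (\<lambda>(i, m). partial_bra i ** U ** partial_ket (u m))"
    by (rule channel_eq_kraus_map)
  have "trace (channel \<rho>0 U X) = trace X" for X :: "'a cmat"
    using assms by (simp add: density_def trace_channel)
  then show ?thesis
    by (intro that[OF channel] kraus_dual_unital) (simp add: channel)
qed

section \<open>Operator Jensen inequality for the logarithm\<close>

lemma sum_cinner_cauchy_schwarz:
  fixes a b :: "'k::finite \<Rightarrow> complex^'n::finite"
  assumes V: "unitary V" and y: "\<And>j. 0 < y j"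
  shows "(cmod (\<Sum>k\<in>UNIV. cinner (a k) (b k)))\<^sup>2 \<le>
    Re (\<Sum>k\<in>UNIV. cinner (a k) ((V ** cdiag (\<lambda>j. inverse (y j)) ** adj V) *v a k)) *
    Re (\<Sum>k\<in>UNIV. cinner (b k) ((V ** cdiag y ** adj V) *v b k))"
proof -
  define \<alpha> where "\<alpha> k j = cinner (column j V) (a k)" for k j
  define \<beta> where "\<beta> k j = cinner (column j V) (b k)" for k j
  define F where "F kj = cmod (\<alpha> (fst kj) (snd kj)) / sqrt (y (snd kj))" for kj
  define G where "G kj = sqrt (y (snd kj)) * cmod (\<beta> (fst kj) (snd kj))" for kj
  have pairs: "sum h (UNIV :: ('k \<times> 'n) set) = (\<Sum>k\<in>UNIV. \<Sum>j\<in>UNIV. h (k, j))" for h :: "_ \<Rightarrow> real"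
    using sum.cartesian_product[of "\<lambda>k j. h (k, j)" UNIV UNIV] by simp
  have "cmod (\<Sum>k\<in>UNIV. cinner (a k) (b k)) = cmod (\<Sum>k\<in>UNIV. \<Sum>j\<in>UNIV. cnj (\<alpha> k j) * \<beta> k j)"
    unfolding \<alpha>_def \<beta>_def by (rule arg_cong[where f = cmod], rule sum.cong[OF refl],
        rule cinner_expand_unitary[OF V])
  also have "\<dots> \<le> (\<Sum>k\<in>UNIV. \<Sum>j\<in>UNIV. cmod (\<alpha> k j) * cmod (\<beta> k j))"
    by (rule order_trans[OF norm_sum sum_mono], rule order_trans[OF norm_sum])
      (simp add: norm_mult)
  also have "\<dots> = (\<Sum>kj\<in>UNIV. F kj * G kj)"
    using y by (simp add: pairs F_def G_def less_imp_neq[symmetric])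
  finally have "(cmod (\<Sum>k\<in>UNIV. cinner (a k) (b k)))\<^sup>2 \<le> (\<Sum>kj\<in>UNIV. F kj * G kj)\<^sup>2"
    by (intro power_mono) auto
  also have "\<dots> \<le> (\<Sum>kj\<in>UNIV. (F kj)\<^sup>2) * (\<Sum>kj\<in>UNIV. (G kj)\<^sup>2)"
    by (rule Cauchy_Schwarz_ineq_sum)
  also have "(\<Sum>kj\<in>UNIV. (F kj)\<^sup>2) =
      Re (\<Sum>k\<in>UNIV. cinner (a k) ((V ** cdiag (\<lambda>j. inverse (y j)) ** adj V) *v a k))"
  proof -
    have "(F kj)\<^sup>2 = inverse (y (snd kj)) * (cmod (\<alpha> (fst kj) (snd kj)))\<^sup>2" for kj
      using y[of "snd kj"] by (simp add: F_def divide_inverse power_mult_distrib power_inverse)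
    then show ?thesis
      by (simp only: pairs fst_conv snd_conv \<alpha>_def quadratic_form_conj_diag Re_complex_of_real
          flip: of_real_sum)
  qed
  also have "(\<Sum>kj\<in>UNIV. (G kj)\<^sup>2) = Re (\<Sum>k\<in>UNIV. cinner (b k) ((V ** cdiag y ** adj V) *v b k))"
  proof -
    have "(G kj)\<^sup>2 = y (snd kj) * (cmod (\<beta> (fst kj) (snd kj)))\<^sup>2" for kj
      using y[of "snd kj"] by (simp add: G_def power_mult_distrib)
    then show ?thesis
      by (simp only: pairs fst_conv snd_conv \<beta>_def quadratic_form_conj_diag Re_complex_of_real
          flip: of_real_sum)
  qed
  finally show ?thesis .
qed

lemma kraus_dual_cauchy_schwarz:
  fixes K :: "'k::finite \<Rightarrow> complex^'n::finite^'n"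
  assumes A: "posdef A" and unital: "kraus_dual K (mat 1) = mat 1"
  shows "(cmod (cinner u z))\<^sup>2 \<le>
    Re (cinner u (kraus_dual K (mat_fun inverse A) *v u)) * Re (cinner z (kraus_dual K A *v z))"
proof -
  obtain V p where V: "unitary V" and A_eq: "A = V ** cdiag p ** adj V" and p: "\<And>b. 0 < p b"
    using posdef_unitary_diagonalization[OF A] by blast
  have "cinner u z = (\<Sum>k\<in>UNIV. cinner (K k *v u) (K k *v z))"
    using cinner_kraus_dual[of u K "mat 1" z] unital by simp
  then show ?thesis
    using sum_cinner_cauchy_schwarz[where a = "\<lambda>k. K k *v u" and b = "\<lambda>k. K k *v z" and y = p,
        OF V p]
    by (simp add: A_eq mat_fun_conj_diag[OF V] cinner_kraus_dual o_def)
qed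

text \<open>Choi's inequality \<open>\<Phi>(A)\<^sup>-\<^sup>1 \<le> \<Phi>(A\<^sup>-\<^sup>1)\<close> for the unital map \<open>\<Phi> = kraus_dual K\<close>:
  with \<open>z = \<Phi>(A)\<^sup>-\<^sup>1 u\<close>, the Cauchy-Schwarz inequality above reads
  \<open>\<langle>u, z\<rangle>\<^sup>2 \<le> \<langle>u, \<Phi>(A\<^sup>-\<^sup>1) u\<rangle> \<langle>u, z\<rangle>\<close>.\<close>

lemma kraus_dual_inverse_le:
  fixes K :: "'k::finite \<Rightarrow> complex^'n::finite^'n"
  assumes A: "posdef A" and unital: "kraus_dual K (mat 1) = mat 1"
  shows "Re (cinner u (mat_fun inverse (kraus_dual K A) *v u)) \<le>
         Re (cinner u (kraus_dual K (mat_fun inverse A) *v u))"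
proof -
  obtain V p where V: "unitary V" and A_eq: "A = V ** cdiag p ** adj V" and p: "\<And>b. 0 < p b"
    using posdef_unitary_diagonalization[OF A] by blast
  obtain W \<mu> where W: "unitary W" and N_eq: "kraus_dual K A = W ** cdiag \<mu> ** adj W"
    and \<mu>: "\<And>j. 0 < \<mu> j"
    using posdef_unitary_diagonalization[OF posdef_kraus_dual[OF A unital]] by blast
  define z where "z = mat_fun inverse (kraus_dual K A) *v u"
  define q where "q = (\<Sum>j\<in>UNIV. inverse (\<mu> j) * (cmod (cinner (column j W) u))\<^sup>2)"
  define r where "r = Re (cinner u (kraus_dual K (mat_fun inverse A) *v u))"
  have uz: "cinner u z = complex_of_real q"
    by (simp add: z_def q_def N_eq mat_fun_conj_diag[OF W] quadratic_form_conj_diag o_def)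
  have "0 \<le> q"
    unfolding q_def using \<mu> by (intro sum_nonneg mult_nonneg_nonneg) (auto intro: less_imp_le)
  have "posdef (kraus_dual K (mat_fun inverse A))"
    using p by (intro posdef_kraus_dual[OF _ unital])
      (simp add: A_eq mat_fun_conj_diag[OF V] posdef_conj_diag[OF V])
  then have "0 \<le> r"
    unfolding r_def by (metis posdef_imp_psd psd_def)
  have "kraus_dual K A ** mat_fun inverse (kraus_dual K A) = mat 1"
    using \<mu> unitaryD2[OF W]
    by (simp add: N_eq mat_fun_conj_diag[OF W] conj_diag_mult[OF W] cdiag_const_1 o_def
        less_imp_neq[symmetric])
  then have "cinner z (kraus_dual K A *v z) = complex_of_real q"
    using uz cinner_commute[of z u] by (simp add: z_def matrix_vector_mul_assoc)
  then have "q\<^sup>2 \<le> r * q"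
    using kraus_dual_cauchy_schwarz[OF A unital, of u z] uz by (simp add: r_def)
  then have "q \<le> r"
    using \<open>0 \<le> q\<close> \<open>0 \<le> r\<close> by (cases "q = 0") (auto simp: power2_eq_square)
  then show ?thesis
    using uz by (simp add: r_def flip: z_def)
qed

lemma kraus_dual_resolvent_le:
  fixes K :: "'k::finite \<Rightarrow> complex^'n::finite^'n"
  assumes A: "posdef A" and unital: "kraus_dual K (mat 1) = mat 1" and "0 \<le> t"
  shows "Re (cinner u (mat_fun (\<lambda>x. inverse (x + t)) (kraus_dual K A) *v u)) \<le>
         Re (cinner u (kraus_dual K (mat_fun (\<lambda>x. inverse (x + t)) A) *v u))"
proof -
  obtain V p where V: "unitary V" and A_eq: "A = V ** cdiag p ** adj V" and p: "\<And>b. 0 < p b"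
    using posdef_unitary_diagonalization[OF A] by blast
  obtain W \<mu> where W: "unitary W" and N_eq: "kraus_dual K (V ** cdiag p ** adj V) = W ** cdiag \<mu> ** adj W"
    using posdef_unitary_diagonalization[OF posdef_kraus_dual[OF A unital]] unfolding A_eq by blast
  let ?A = "V ** cdiag (\<lambda>b. p b + t) ** adj V"
  have "posdef ?A"
    using p \<open>0 \<le> t\<close> by (simp add: posdef_conj_diag[OF V] add_pos_nonneg)
  moreover have "kraus_dual K ?A = W ** cdiag (\<lambda>j. \<mu> j + t) ** adj W"
    by (simp add: conj_diag_shift[OF V] conj_diag_shift[OF W] kraus_dual_add kraus_dual_cscale
        unital N_eq)
  ultimately show ?thesis
    using kraus_dual_inverse_le[OF _ unital, of ?A u]
    by (simp add: A_eq N_eq mat_fun_conj_diag[OF V] mat_fun_conj_diag[OF W] o_def)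
qed

lemma sum_ln_shift_le:
  fixes b y :: "'j \<Rightarrow> real"
  assumes b: "\<And>j. j \<in> J \<Longrightarrow> 0 \<le> b j" and y: "\<And>j. j \<in> J \<Longrightarrow> 0 < y j" and "0 < T"
  shows "(\<Sum>j\<in>J. b j * ln (y j + T)) \<le> (\<Sum>j\<in>J. b j) * ln T + (\<Sum>j\<in>J. b j * y j) / T"
proof -
  have "b j * ln (y j + T) \<le> b j * ln T + b j * y j / T" if "j \<in> J" for j
  proof -
    have "ln ((y j + T) / T) \<le> y j / T"
      using \<open>0 < T\<close> y[OF that] ln_le_minus_one[of "(y j + T) / T"] by (simp add: field_simps)
    then have "ln (y j + T) \<le> ln T + y j / T"
      using \<open>0 < T\<close> y[OF that] by (simp add: ln_div)
    then have "b j * ln (y j + T) \<le> b j * (ln T + y j / T)"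
      using b[OF that] by (rule mult_left_mono)
    then show ?thesis
      by (simp add: distrib_left)
  qed
  then have "(\<Sum>j\<in>J. b j * ln (y j + T)) \<le> (\<Sum>j\<in>J. b j * ln T + b j * y j / T)"
    by (rule sum_mono)
  also have "\<dots> = (\<Sum>j\<in>J. b j) * ln T + (\<Sum>j\<in>J. b j * y j) / T"
    by (simp add: sum.distrib sum_distrib_right sum_divide_distrib)
  finally show ?thesis .
qed

text \<open>The hypothesis, integrated over \<open>t \<in> [0, \<infinity>)\<close>, gives the claim through
  \<open>ln x = \<integral>\<^sub>0\<^sup>\<infinity> (1/(1 + t) - 1/(x + t)) dt\<close>. Instead of integrating we use that the primitive
  \<open>g T = \<Sum> b ln (y + T) - \<Sum> a ln (x + T)\<close> is nondecreasing and tends to \<open>0\<close>.\<close>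

lemma sum_ln_le_of_resolvent_le:
  fixes a x :: "'i \<Rightarrow> real" and b y :: "'j \<Rightarrow> real"
  assumes "finite I" "finite J"
    and a: "\<And>i. i \<in> I \<Longrightarrow> 0 \<le> a i" and b: "\<And>j. j \<in> J \<Longrightarrow> 0 \<le> b j"
    and mass: "(\<Sum>i\<in>I. a i) = (\<Sum>j\<in>J. b j)"
    and x: "\<And>i. i \<in> I \<Longrightarrow> 0 < x i" and y: "\<And>j. j \<in> J \<Longrightarrow> 0 < y j"
    and resolvent: "\<And>t. 0 \<le> t \<Longrightarrow> (\<Sum>i\<in>I. a i / (x i + t)) \<le> (\<Sum>j\<in>J. b j / (y j + t))"
  shows "(\<Sum>j\<in>J. b j * ln (y j)) \<le> (\<Sum>i\<in>I. a i * ln (x i))"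
proof -
  define g where "g T = (\<Sum>j\<in>J. b j * ln (y j + T)) - (\<Sum>i\<in>I. a i * ln (x i + T))" for T
  define P where "P = (\<Sum>j\<in>J. b j * y j)"
  have "0 \<le> P"
    unfolding P_def using b y by (intro sum_nonneg) (simp add: less_imp_le)
  have g_mono: "g 0 \<le> g T" if "0 \<le> T" for T
  proof (rule DERIV_nonneg_imp_nondecreasing[OF that])
    fix t :: real assume t: "0 \<le> t" "t \<le> T"
    have "(g has_real_derivative (\<Sum>j\<in>J. b j / (y j + t)) - (\<Sum>i\<in>I. a i / (x i + t))) (at t)"
      unfolding g_def using x y t(1)
      by (auto intro!: derivative_eq_intros simp: add_pos_nonneg divide_inverse mult.commute)
    then show "\<exists>d. (g has_real_derivative d) (at t) \<and> 0 \<le> d"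
      using resolvent[OF t(1)] by auto
  qed
  have g_bound: "g T \<le> P / T" if "0 < T" for T
  proof -
    have "(\<Sum>i\<in>I. a i * ln T) \<le> (\<Sum>i\<in>I. a i * ln (x i + T))"
    proof (intro sum_mono mult_left_mono)
      show "ln T \<le> ln (x i + T)" if "i \<in> I" for i
        using x[OF that] \<open>0 < T\<close> by simp
    qed (use a in auto)
    then show ?thesis
      using sum_ln_shift_le[where J = J and b = b and y = y, OF b y \<open>0 < T\<close>]
      by (simp add: g_def P_def mass sum_distrib_right[symmetric])
  qed
  have "g 0 \<le> 0"
  proof (rule ccontr)
    assume "\<not> g 0 \<le> 0"
    define T where "T = (P + 1) / g 0"
    have "0 < T"
      using \<open>\<not> g 0 \<le> 0\<close> \<open>0 \<le> P\<close> by (simp add: T_def)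
    then have "g 0 \<le> P / T"
      using g_mono[of T] g_bound[of T] by simp
    also have "\<dots> < g 0"
      using \<open>\<not> g 0 \<le> 0\<close> \<open>0 \<le> P\<close> by (simp add: T_def field_simps)
    finally show False
      by simp
  qed
  then show ?thesis
    by (simp add: g_def)
qed

lemma kraus_dual_mat_ln_le:
  fixes K :: "'k::finite \<Rightarrow> complex^'n::finite^'n"
  assumes A: "posdef A" and unital: "kraus_dual K (mat 1) = mat 1"
  shows "Re (cinner u (kraus_dual K (mat_ln A) *v u)) \<le> Re (cinner u (mat_ln (kraus_dual K A) *v u))"
proof -
  obtain V p where V: "unitary V" and A_eq: "A = V ** cdiag p ** adj V" and p: "\<And>b. 0 < p b"
    using posdef_unitary_diagonalization[OF A] by blast
  obtain W \<mu> where W: "unitary W" and N_eq: "kraus_dual K (V ** cdiag p ** adj V) = W ** cdiag \<mu> ** adj W"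
    and \<mu>: "\<And>j. 0 < \<mu> j"
    using posdef_unitary_diagonalization[OF posdef_kraus_dual[OF A unital]] unfolding A_eq by blast
  define c where "c b = (\<Sum>k\<in>UNIV. (cmod (cinner (column b V) (K k *v u)))\<^sup>2)" for b
  define m where "m j = (cmod (cinner (column j W) u))\<^sup>2" for j
  have dual_form: "Re (cinner u (kraus_dual K (mat_fun f A) *v u)) = (\<Sum>b\<in>UNIV. f (p b) * c b)" for f
  proof -
    have "Re (cinner u (kraus_dual K (mat_fun f A) *v u)) =
        (\<Sum>k\<in>UNIV. \<Sum>b\<in>UNIV. f (p b) * (cmod (cinner (column b V) (K k *v u)))\<^sup>2)"
      by (simp add: A_eq mat_fun_conj_diag[OF V] cinner_kraus_dual quadratic_form_conj_diag Re_sum)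
    also have "\<dots> = (\<Sum>b\<in>UNIV. \<Sum>k\<in>UNIV. f (p b) * (cmod (cinner (column b V) (K k *v u)))\<^sup>2)"
      by (rule sum.swap)
    finally show ?thesis
      by (simp add: c_def sum_distrib_left)
  qed
  have W_form: "Re (cinner u (mat_fun f (kraus_dual K A) *v u)) = (\<Sum>j\<in>UNIV. f (\<mu> j) * m j)" for f
    by (simp add: A_eq N_eq mat_fun_conj_diag[OF W] quadratic_form_conj_diag m_def)
  have "(\<Sum>j\<in>UNIV. m j) = (\<Sum>b\<in>UNIV. c b)"
    using dual_form[of "\<lambda>_. 1"] W_form[of "\<lambda>_. 1"] unital unitaryD2[OF V] unitaryD2[OF W]
    by (simp add: A_eq N_eq mat_fun_conj_diag[OF V] mat_fun_conj_diag[OF W] o_def cdiag_const_1)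
  moreover have "(\<Sum>j\<in>UNIV. m j / (\<mu> j + t)) \<le> (\<Sum>b\<in>UNIV. c b / (p b + t))" if "0 \<le> t" for t
    using kraus_dual_resolvent_le[OF A unital that, of u]
    by (simp add: dual_form W_form divide_inverse mult.commute)
  ultimately have "(\<Sum>b\<in>UNIV. c b * ln (p b)) \<le> (\<Sum>j\<in>UNIV. m j * ln (\<mu> j))"
    using p \<mu> by (intro sum_ln_le_of_resolvent_le) (simp_all add: c_def m_def sum_nonneg)
  then show ?thesis
    by (simp add: dual_form W_form mult.commute)
qed

lemma trace_psd_mult_mono:
  assumes "psd \<Gamma>" and le: "\<And>u. Re (cinner u (X *v u)) \<le> Re (cinner u (Y *v u))"
  shows "Re (trace (\<Gamma> ** X)) \<le> Re (trace (\<Gamma> ** Y))"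
proof -
  obtain V d where "unitary V" and \<Gamma>: "\<Gamma> = V ** cdiag d ** adj V" and d: "\<And>i. 0 \<le> d i"
    using psd_unitary_diagonalization[OF assms(1)] by blast
  have trace_eq: "Re (trace (\<Gamma> ** Z)) = (\<Sum>a\<in>UNIV. d a * Re (cinner (column a V) (Z *v column a V)))"
    for Z
    unfolding \<Gamma> trace_conj_diag_mult Re_sum by simp
  show ?thesis
    unfolding trace_eq using d le by (intro sum_mono mult_left_mono) auto
qed

section \<open>Gibbs states, heat and relative entropy\<close>

lemma gibbs_conj_diag:
  assumes V: "unitary V" and H: "H = V ** cdiag h ** adj V"
  shows "gibbs \<beta> H = V ** cdiag (\<lambda>a. exp (- \<beta> * h a) / (\<Sum>b\<in>UNIV. exp (- \<beta> * h b))) ** adj V"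
proof -
  define Z where "Z = (\<Sum>b\<in>UNIV. exp (- \<beta> * h b))"
  have "cscale (- complex_of_real \<beta>) H = V ** cdiag (\<lambda>a. - \<beta> * h a) ** adj V"
    using cscale_conj_diag[of "- \<beta>" V h "adj V"] H by simp
  then have exp_eq: "mat_exp (cscale (- complex_of_real \<beta>) H) = V ** cdiag (\<lambda>a. exp (- \<beta> * h a)) ** adj V"
    by (simp add: mat_fun_conj_diag[OF V] o_def)
  have "1 / trace (V ** cdiag (\<lambda>a. exp (- \<beta> * h a)) ** adj V) = complex_of_real (1 / Z)"
    by (simp add: trace_conj_diag[OF V] Z_def)
  then have "gibbs \<beta> H = cscale (complex_of_real (1 / Z)) (V ** cdiag (\<lambda>a. exp (- \<beta> * h a)) ** adj V)"
    unfolding gibbs_def exp_eq by simp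
  also have "\<dots> = V ** cdiag (\<lambda>a. exp (- \<beta> * h a) / Z) ** adj V"
    unfolding cscale_conj_diag by simp
  finally show ?thesis
    by (simp add: Z_def)
qed

lemma posdef_gibbs:
  assumes "hermitian H"
  shows "posdef (gibbs \<beta> H)"
proof -
  obtain V h where V: "unitary V" and H: "H = V ** cdiag h ** adj V"
    using hermitian_unitary_diagonalization[OF assms] by blast
  have "0 < (\<Sum>b\<in>UNIV. exp (- \<beta> * h b))"
    by (intro sum_pos) auto
  then show ?thesis
    by (simp add: gibbs_conj_diag[OF V H] posdef_conj_diag[OF V])
qed

lemma trace_gibbs:
  assumes "hermitian H"
  shows "trace (gibbs \<beta> H) = 1"
proof -
  obtain V h where V: "unitary V" and H: "H = V ** cdiag h ** adj V"
    using hermitian_unitary_diagonalization[OF assms] by blast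
  have "0 < (\<Sum>b\<in>UNIV. exp (- \<beta> * h b))"
    by (intro sum_pos) auto
  then show ?thesis
    by (simp add: gibbs_conj_diag[OF V H] trace_conj_diag[OF V] flip: sum_divide_distrib)
qed

lemma mat_ln_gibbs:
  assumes "hermitian H"
  obtains c where "mat_ln (gibbs \<beta> H) = cscale (complex_of_real c) (mat 1) - cscale (complex_of_real \<beta>) H"
proof -
  obtain V h where V: "unitary V" and H: "H = V ** cdiag h ** adj V"
    using hermitian_unitary_diagonalization[OF assms] by blast
  define Z where "Z = (\<Sum>b\<in>UNIV. exp (- \<beta> * h b))"
  have "0 < Z"
    unfolding Z_def by (intro sum_pos) auto
  have "mat_ln (gibbs \<beta> H) = V ** cdiag (ln \<circ> (\<lambda>a. exp (- \<beta> * h a) / Z)) ** adj V"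
    unfolding gibbs_conj_diag[OF V H] mat_fun_conj_diag[OF V] Z_def ..
  also have "\<dots> = V ** cdiag (\<lambda>a. - \<beta> * h a + - ln Z) ** adj V"
    using \<open>0 < Z\<close> by (simp add: o_def ln_div)
  also have "\<dots> = V ** cdiag (\<lambda>a. - \<beta> * h a) ** adj V + cscale (complex_of_real (- ln Z)) (mat 1)"
    by (rule conj_diag_shift[OF V])
  also have "\<dots> = cscale (complex_of_real (- \<beta>)) H + cscale (complex_of_real (- ln Z)) (mat 1)"
    by (simp only: H cscale_conj_diag)
  also have "\<dots> = cscale (complex_of_real (- ln Z)) (mat 1) - cscale (complex_of_real \<beta>) H"
    by (simp add: vec_eq_iff)
  finally show ?thesis
    by (rule that)
qed

text \<open>Unitality of \<open>\<Phi> = kraus_dual K\<close> turns \<open>\<beta> H = c - ln \<Gamma>\<close> into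
  \<open>\<Phi>(\<beta> H) = c - \<Phi>(ln \<Gamma>)\<close>, so the constant cancels.\<close>

lemma kraus_heat_eq:
  assumes unital: "kraus_dual K (mat 1) = mat 1"
    and ln_\<Gamma>: "mat_ln \<Gamma> = cscale (complex_of_real c) (mat 1) - cscale (complex_of_real \<beta>) H"
  shows "\<beta> * Re (trace (kraus_map K \<Gamma> ** H) - trace (\<Gamma> ** H)) =
         Re (trace (\<Gamma> ** mat_ln \<Gamma>)) - Re (trace (\<Gamma> ** kraus_dual K (mat_ln \<Gamma>)))"
proof -
  have "kraus_dual K (mat_ln \<Gamma>) =
      cscale (complex_of_real c) (mat 1) - cscale (complex_of_real \<beta>) (kraus_dual K H)"
    by (simp add: ln_\<Gamma> kraus_dual_diff kraus_dual_cscale unital)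
  then have dual_trace: "trace (\<Gamma> ** kraus_dual K (mat_ln \<Gamma>)) =
      complex_of_real c * trace \<Gamma> - complex_of_real \<beta> * trace (\<Gamma> ** kraus_dual K H)"
    by (simp add: matrix_diff_ldistrib trace_sub trace_mult_cscale)
  have trace: "trace (\<Gamma> ** mat_ln \<Gamma>) =
      complex_of_real c * trace \<Gamma> - complex_of_real \<beta> * trace (\<Gamma> ** H)"
    by (simp add: ln_\<Gamma> matrix_diff_ldistrib trace_sub trace_mult_cscale)
  show ?thesis
    unfolding trace_kraus_map_mult trace dual_trace by (simp add: algebra_simps)
qed

lemma rel_entropy_normalized:
  assumes M: "posdef M" and \<Gamma>: "trace \<Gamma> = 1"
  shows "rel_entropy \<Gamma> (cscale (1 / trace M) M) =
    ereal (Re (trace (\<Gamma> ** mat_ln \<Gamma>)) - Re (trace (\<Gamma> ** mat_ln M)) + ln (Re (trace M)))"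
proof -
  define T where "T = Re (trace M)"
  have "0 < T" and trace_M: "trace M = complex_of_real T"
    using posdef_trace[OF M] by (simp_all add: T_def)
  then have normalized: "cscale (1 / trace M) M = cscale (complex_of_real (1 / T)) M"
    by simp
  have "supp (cscale (complex_of_real (1 / T)) M) = UNIV"
    using \<open>0 < T\<close> by (intro posdef_supp posdef_cscale M) simp
  moreover have "mat_ln (cscale (complex_of_real (1 / T)) M) =
      mat_ln M + cscale (complex_of_real (- ln T)) (mat 1)"
    using mat_ln_cscale[OF M, of "1 / T"] \<open>0 < T\<close> by (simp add: ln_div)
  ultimately show ?thesis
    by (simp add: rel_entropy_def normalized matrix_add_ldistrib trace_sub trace_add
        trace_cscale_mat_1 \<Gamma> T_def)
qed

theorem mainTheorem4:
  fixes \<rho>0 :: "complex^'s::finite^'s"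
    and U :: "complex^('s \<times> 'a::finite)^('s \<times> 'a)"
    and H :: "complex^'a^'a"
    and \<beta> :: real
  assumes "density \<rho>0"
    and "unitary U"
    and "hermitian H"
    and "\<beta> > 0"
  shows "let \<Gamma> = gibbs \<beta> H;
             E = channel \<rho>0 U;
             Ed = trace_dual E;
             Q = Re (trace (E \<Gamma> ** H) - trace (\<Gamma> ** H));
             \<gamma> = cscale (1 / trace (Ed \<Gamma>)) (Ed \<Gamma>)
         in ereal (\<beta> * Q) \<ge> rel_entropy \<Gamma> \<gamma> - ereal (ln (Re (trace (Ed \<Gamma>))))"
proof -
  obtain K :: "'s \<times> 's \<Rightarrow> 'a cmat"
    where channel: "channel \<rho>0 U = kraus_map K" and unital: "kraus_dual K (mat 1) = mat 1"
    using channel_unital_kraus_form[OF assms(1,2)] by blast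
  define \<Gamma> where "\<Gamma> = gibbs \<beta> H"
  define M where "M = kraus_dual K \<Gamma>"
  have \<Gamma>: "posdef \<Gamma>" "trace \<Gamma> = 1"
    unfolding \<Gamma>_def using assms(3) by (simp_all add: posdef_gibbs trace_gibbs)
  obtain c where ln_\<Gamma>: "mat_ln \<Gamma> = cscale (complex_of_real c) (mat 1) - cscale (complex_of_real \<beta>) H"
    unfolding \<Gamma>_def using mat_ln_gibbs[OF assms(3)] by blast
  have heat: "\<beta> * Re (trace (kraus_map K \<Gamma> ** H) - trace (\<Gamma> ** H)) =
      Re (trace (\<Gamma> ** mat_ln \<Gamma>)) - Re (trace (\<Gamma> ** kraus_dual K (mat_ln \<Gamma>)))"
    by (rule kraus_heat_eq[OF unital ln_\<Gamma>])
  have jensen: "Re (trace (\<Gamma> ** kraus_dual K (mat_ln \<Gamma>))) \<le> Re (trace (\<Gamma> ** mat_ln M))"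
    unfolding M_def using posdef_imp_psd[OF \<Gamma>(1)]
    by (rule trace_psd_mult_mono) (rule kraus_dual_mat_ln_le[OF \<Gamma>(1) unital])
  have entropy: "rel_entropy \<Gamma> (cscale (1 / trace M) M) =
      ereal (Re (trace (\<Gamma> ** mat_ln \<Gamma>)) - Re (trace (\<Gamma> ** mat_ln M)) + ln (Re (trace M)))"
    unfolding M_def by (rule rel_entropy_normalized[OF posdef_kraus_dual[OF \<Gamma>(1) unital] \<Gamma>(2)])
  show ?thesis
    using heat jensen
    unfolding Let_def channel trace_dual_kraus_map \<Gamma>_def[symmetric] M_def[symmetric] entropy
    by simp
qed

end
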